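(* Let $\Phi=\{\varphi_n\}_{n=1}^N\subseteq\mathbb{R}^M$ and let $\mathcal{A}\colon\mathbb{R}^M/\{\pm1\}\to\mathbb{R}^N$ be defined by $(\mathcal{A}(x))(n):=|\langle x,\varphi_n\rangle|^2$. Suppose $\Phi$ spans $\mathbb{R}^M$ and each $\varphi_n$ is nonzero. Then $\mathcal{A}$ is almost injective if and only if for each nonempty proper subset $S\subseteq\{1,\ldots,N\}$, the Minkowski sum $\operatorname{span}(\Phi_S)^\perp+\operatorname{span}(\Phi_{S^\mathrm{c}})^\perp$ is a proper subspace of $\mathbb{R}^M$.
   Context: For $S\subseteq\{1,\ldots,N\}$, $\Phi_S:=\{\varphi_n\}_{n\in S}$ and $S^\mathrm{c}$ is the complement of $S$ in $\{1,\ldots,N\}$. The map $\mathcal{A}$ is called almost injective if $\mathcal{A}^{-1}(\mathcal{A}(x))=\{\pm x\}$ for (Lebesgue) almost every $x\in\mathbb{R}^M$. *)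

theory Defs
  imports "HOL-Analysis.Analysis"
begin

definition intensity_map :: "nat \<Rightarrow> (nat \<Rightarrow> real ^ 'm) \<Rightarrow> real ^ 'm \<Rightarrow> (nat \<Rightarrow> real)" where
  "intensity_map N phi x = (\<lambda>n. if n \<in> {1..N} then \<bar>x \<bullet> phi n\<bar>^2 else 0)"

definition almost_injective :: "nat \<Rightarrow> (nat \<Rightarrow> real ^ 'm) \<Rightarrow> bool" where
  "almost_injective N phi \<longleftrightarrow>
     (AE x in lebesgue. {y. intensity_map N phi y = intensity_map N phi x} = {x, - x})"

end

theory Submission
  imports Defs
begin

text \<open>If y has the same intensity measurements as x, let S be the set of n where
  \<open>\<langle>x, \<phi>\<^sub>n\<rangle> = \<langle>y, \<phi>\<^sub>n\<rangle>\<close>. Then u = (x - y)/2 is orthogonal to \<open>\<Phi>\<^sub>S\<close>,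
  v = (x + y)/2 is orthogonal to \<open>\<Phi>\<^bsub>S\<^sup>c\<^esub>\<close>, and x = u + v; conversely any such splitting
  x = u + v yields the further preimage v - u. Since \<open>\<Phi>\<close> spans, S = {} and S = {1..N}
  only give y = \<open>\<plusminus>\<close>x, so the x with a fibre larger than {x, -x} form the finite union of the
  subspaces \<open>span(\<Phi>\<^sub>S)\<^sup>\<bottom> + span(\<Phi>\<^bsub>S\<^sup>c\<^esub>)\<^sup>\<bottom>\<close> over nonempty proper S. A subspace is
  null iff it is proper. If one of these sums is the whole space, every x outside its two
  summands, which are proper since all \<open>\<phi>\<^sub>n\<close> are nonzero, has u, v \<noteq> 0 and so an
  ambiguous fibre.\<close>

lemma negligible_proper_subspace:
  fixes V :: "'a::euclidean_space set"
  assumes "subspace V" "V \<noteq> UNIV"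
  shows "negligible V"
proof (rule negligible_lowdim)
  have "dim V \<noteq> DIM('a)"
    using assms dim_eq_full span_eq_iff by metis
  then show "dim V < DIM('a)"
    using dim_subset_UNIV le_neq_implies_less by blast
qed

lemma orthogonal_comp_span_image_iff:
  fixes f :: "'i \<Rightarrow> 'a::real_inner"
  shows "x \<in> orthogonal_comp (span (f ` I)) \<longleftrightarrow> (\<forall>i\<in>I. x \<bullet> f i = 0)"
proof
  assume "x \<in> orthogonal_comp (span (f ` I))"
  then show "\<forall>i\<in>I. x \<bullet> f i = 0"
    by (auto simp: orthogonal_comp_def orthogonal_def inner_commute span_base)
next
  assume "\<forall>i\<in>I. x \<bullet> f i = 0"
  then have "orthogonal x y" if "y \<in> span (f ` I)" for y
    using that by (rule_tac orthogonal_to_span) (auto simp: orthogonal_def)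
  then show "x \<in> orthogonal_comp (span (f ` I))"
    by (auto simp: orthogonal_comp_def orthogonal_commute)
qed

lemma orthogonal_comp_span_image_neq_UNIV:
  fixes f :: "'i \<Rightarrow> 'a::real_inner"
  assumes "i \<in> I" "f i \<noteq> 0"
  shows "orthogonal_comp (span (f ` I)) \<noteq> UNIV"
  using assms orthogonal_comp_span_image_iff[of "f i" f I] by auto

lemma diff_eq_add_iff: "b - a = a + b \<longleftrightarrow> a = (0::'a::real_vector)"
  by (auto simp: algebra_simps simp flip: scaleR_2)

lemma diff_eq_minus_add_iff: "b - a = - (a + b) \<longleftrightarrow> b = (0::'a::real_vector)"
  by (auto simp: algebra_simps simp flip: scaleR_2)

lemma intensity_map_eq_iff:
  "intensity_map N phi y = intensity_map N phi x \<longleftrightarrow>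
    (\<forall>n\<in>{1..N}. y \<bullet> phi n = x \<bullet> phi n \<or> y \<bullet> phi n = - (x \<bullet> phi n))"
  by (auto simp: intensity_map_def fun_eq_iff power2_eq_iff)

lemma intensity_fibre_neq_pair_iff:
  "{y. intensity_map N phi y = intensity_map N phi x} \<noteq> {x, - x} \<longleftrightarrow>
    (\<exists>y. intensity_map N phi y = intensity_map N phi x \<and> y \<noteq> x \<and> y \<noteq> - x)"
  by (auto simp: intensity_map_eq_iff)

lemma intensity_fibre_neq_pair_of_sum:
  fixes phi :: "nat \<Rightarrow> real ^ 'm"
  assumes "a \<in> orthogonal_comp (span (phi ` S))"
    and "b \<in> orthogonal_comp (span (phi ` ({1..N} - S)))"
    and "a \<noteq> 0" "b \<noteq> 0"
  shows "{y. intensity_map N phi y = intensity_map N phi (a + b)} \<noteq> {a + b, - (a + b)}"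
proof -
  have "intensity_map N phi (b - a) = intensity_map N phi (a + b)"
    using assms(1,2) by (auto simp: intensity_map_eq_iff orthogonal_comp_span_image_iff
        inner_diff_left inner_add_left)
  moreover have "b - a \<noteq> a + b" "b - a \<noteq> - (a + b)"
    using assms(3,4) diff_eq_add_iff diff_eq_minus_add_iff by blast+
  ultimately show ?thesis
    unfolding intensity_fibre_neq_pair_iff by blast
qed

lemma intensity_fibre_neq_pair_imp_in_sum:
  fixes phi :: "nat \<Rightarrow> real ^ 'm"
  assumes span: "span (phi ` {1..N}) = UNIV"
    and "{y. intensity_map N phi y = intensity_map N phi x} \<noteq> {x, - x}"
  obtains S where "S \<subseteq> {1..N}" "S \<noteq> {}" "S \<noteq> {1..N}"
    and "x \<in> {a + b | a b. a \<in> orthogonal_comp (span (phi ` S)) \<and>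
                          b \<in> orthogonal_comp (span (phi ` ({1..N} - S)))}"
proof -
  obtain y where y: "intensity_map N phi y = intensity_map N phi x" "y \<noteq> x" "y \<noteq> - x"
    using assms(2) unfolding intensity_fibre_neq_pair_iff by blast
  define S where "S = {n\<in>{1..N}. (x - y) \<bullet> phi n = 0}"
  define u where "u = (1/2) *\<^sub>R (x - y)"
  define v where "v = (1/2) *\<^sub>R (x + y)"
  have u: "u \<in> orthogonal_comp (span (phi ` S))"
    by (auto simp: orthogonal_comp_span_image_iff u_def S_def)
  have v: "v \<in> orthogonal_comp (span (phi ` ({1..N} - S)))"
    using y(1) by (auto simp: orthogonal_comp_span_image_iff intensity_map_eq_iff v_def S_def
        inner_diff_left inner_add_left)
  have "S \<noteq> {}"
  proof
    assume "S = {}"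
    then have "v = 0"
      using v unfolding \<open>S = {}\<close> Diff_empty span by simp
    then show False
      using y(3) by (simp add: v_def add_eq_0_iff)
  qed
  moreover have "S \<noteq> {1..N}"
  proof
    assume "S = {1..N}"
    then have "u = 0"
      using u unfolding \<open>S = {1..N}\<close> span by simp
    then show False
      using y(2) by (simp add: u_def)
  qed
  moreover have "S \<subseteq> {1..N}"
    by (auto simp: S_def)
  moreover have "x = u + v"
    by (simp add: u_def v_def flip: scaleR_add_right)
  ultimately show thesis
    using that u v by blast
qed

lemma almost_injective_imp_sum_neq_UNIV:
  fixes phi :: "nat \<Rightarrow> real ^ 'm"
  assumes inj: "almost_injective N phi" and nonzero: "\<forall>n\<in>{1..N}. phi n \<noteq> 0"
    and S: "S \<subseteq> {1..N}" "S \<noteq> {}" "S \<noteq> {1..N}"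
  shows "{a + b | a b. a \<in> orthogonal_comp (span (phi ` S)) \<and>
                       b \<in> orthogonal_comp (span (phi ` ({1..N} - S)))} \<noteq> UNIV"
proof
  define V where "V = orthogonal_comp (span (phi ` S))"
  define W where "W = orthogonal_comp (span (phi ` ({1..N} - S)))"
  assume sum: "{a + b | a b. a \<in> V \<and> b \<in> W} = UNIV"
  obtain i j where i: "i \<in> S" "phi i \<noteq> 0" and j: "j \<in> {1..N} - S" "phi j \<noteq> 0"
    using S nonzero by blast
  have "V \<noteq> UNIV"
    unfolding V_def using i by (rule orthogonal_comp_span_image_neq_UNIV)
  moreover have "W \<noteq> UNIV"
    unfolding W_def using j by (rule orthogonal_comp_span_image_neq_UNIV)
  ultimately have "negligible V" "negligible W"
    by (simp_all add: negligible_proper_subspace subspace_orthogonal_comp V_def W_def)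
  obtain Z where Z: "{x \<in> space lebesgue.
      {y. intensity_map N phi y = intensity_map N phi x} \<noteq> {x, - x}} \<subseteq> Z"
    and "emeasure lebesgue Z = 0" "Z \<in> sets lebesgue"
    using inj unfolding almost_injective_def by (rule AE_E)
  then have "negligible Z"
    by (simp add: negligible_iff_null_sets null_sets_def)
  have "x \<in> Z \<union> V \<union> W" for x
  proof (cases "x \<in> V \<union> W")
    case False
    obtain a b where "x = a + b" "a \<in> V" "b \<in> W"
      using sum by blast
    moreover have "a \<noteq> 0" "b \<noteq> 0"
      using False calculation by auto
    ultimately have "{y. intensity_map N phi y = intensity_map N phi x} \<noteq> {x, - x}"
      unfolding V_def W_def using intensity_fibre_neq_pair_of_sum by simp
    then show ?thesis
      using Z by auto
  qed simp
  then have "negligible (UNIV :: (real ^ 'm) set)"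
    by (metis \<open>negligible Z\<close> \<open>negligible V\<close> \<open>negligible W\<close> negligible_Un negligible_subset subsetI)
  then show False
    by simp
qed

lemma sum_neq_UNIV_imp_almost_injective:
  fixes phi :: "nat \<Rightarrow> real ^ 'm"
  assumes span: "span (phi ` {1..N}) = UNIV"
    and proper: "\<forall>S. S \<subseteq> {1..N} \<and> S \<noteq> {} \<and> S \<noteq> {1..N} \<longrightarrow>
       {a + b | a b. a \<in> orthogonal_comp (span (phi ` S)) \<and>
                      b \<in> orthogonal_comp (span (phi ` ({1..N} - S)))} \<noteq> UNIV"
  shows "almost_injective N phi"
  unfolding almost_injective_def
proof (rule AE_I')
  define orth_sum where "orth_sum S = {a + b | a b. a \<in> orthogonal_comp (span (phi ` S)) \<and>
                      b \<in> orthogonal_comp (span (phi ` ({1..N} - S)))}" for S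
  define \<S> where "\<S> = {S. S \<subseteq> {1..N} \<and> S \<noteq> {} \<and> S \<noteq> {1..N}}"
  have "negligible (orth_sum S)" if "S \<in> \<S>" for S
  proof (rule negligible_proper_subspace)
    show "subspace (orth_sum S)"
      unfolding orth_sum_def by (intro subspace_sums subspace_orthogonal_comp)
    show "orth_sum S \<noteq> UNIV"
      using proper that unfolding orth_sum_def \<S>_def by blast
  qed
  moreover have "finite \<S>"
    unfolding \<S>_def by (auto intro: finite_subset)
  ultimately have "negligible (\<Union>S\<in>\<S>. orth_sum S)"
    by (intro negligible_Union) auto
  then show "(\<Union>S\<in>\<S>. orth_sum S) \<in> null_sets lebesgue"
    by (simp add: negligible_iff_null_sets)
  show "{x \<in> space lebesgue. {y. intensity_map N phi y = intensity_map N phi x} \<noteq> {x, - x}}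
      \<subseteq> (\<Union>S\<in>\<S>. orth_sum S)"
  proof (intro subsetI, elim CollectE conjE)
    fix x assume "{y. intensity_map N phi y = intensity_map N phi x} \<noteq> {x, - x}"
    with span obtain S where "S \<subseteq> {1..N}" "S \<noteq> {}" "S \<noteq> {1..N}"
      and "x \<in> {a + b | a b. a \<in> orthogonal_comp (span (phi ` S)) \<and>
                            b \<in> orthogonal_comp (span (phi ` ({1..N} - S)))}"
      by (rule intensity_fibre_neq_pair_imp_in_sum)
    then show "x \<in> (\<Union>S\<in>\<S>. orth_sum S)"
      unfolding orth_sum_def \<S>_def by blast
  qed
qed

theorem theorem10:
  fixes N :: nat and phi :: "nat \<Rightarrow> real ^ 'm"
  assumes "span (phi ` {1..N}) = UNIV"
    and "\<forall>n\<in>{1..N}. phi n \<noteq> 0"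
  shows "almost_injective N phi \<longleftrightarrow>
    (\<forall>S. S \<subseteq> {1..N} \<and> S \<noteq> {} \<and> S \<noteq> {1..N} \<longrightarrow>
       {a + b | a b. a \<in> orthogonal_comp (span (phi ` S)) \<and>
                      b \<in> orthogonal_comp (span (phi ` ({1..N} - S)))} \<noteq> UNIV)"
  using almost_injective_imp_sum_neq_UNIV[OF _ assms(2)]
    sum_neq_UNIV_imp_almost_injective[OF assms(1)] by blast

end
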